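(* There exist constants $C,\epsilon_0>0$ such that for all $L\in\mathbb N^{2}$ and $\eta>0$ with $\eta\,\mathrm{vol}\Lambda_{L}\le\epsilon_0$, all $v\in(2\mathbb Z)^{2}$ and all $z\in\mathbb C\setminus\mathbb T$, \[\mathbb P\Big(\mathrm{dist}\big(z,\sigma(U^{\Lambda_{L}+v}_{\omega}(0))\big)\le\eta\Big)\le C\,\eta\,\mathrm{vol}\Lambda_{L}.\]
   Context: Let $\{e_{\mu}\}_{\mu\in\mathbb Z^{2}}$ be the standard basis of $\ell^{2}(\mathbb Z^{2})$ and $\mathbb T=\{z\in\mathbb C:|z|=1\}$. Let $\Omega=\mathbb T^{\mathbb Z^{2}}$ with the product $\sigma$-algebra and probability $\mathbb P=\bigotimes_{\mu\in\mathbb Z^{2}}d\ell$, $d\ell$ normalized Lebesgue measure on $\mathbb T$. $D_{\omega}e_{\mu}=\omega_{\mu}e_{\mu}$. For $j,k\in\mathbb Z$ let $\mathcal H^{j,k}=\mathrm{span}\{e_{(2j,2k)},e_{(2j+1,2k)},e_{(2j+1,2k+1)},e_{(2j,2k+1)}\}$ and let $S_{\circlearrowleft}$ be the unitary acting on each $\mathcal H^{j,k}$ by the cyclic permutation $e_{(2j,2k)}\mapsto e_{(2j+1,2k)}\mapsto e_{(2j+1,2k+1)}\mapsto e_{(2j,2k+1)}\mapsto e_{(2j,2k)}$. For $L=(L_1,L_2)\in\mathbb N^{2}$ (positive integers) let $\Lambda_{L}=\mathbb Z^{2}\cap([-2L_{1},2L_{1}-1]\times[-2L_{2}+2,2L_{2}+1])$,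 $\mathrm{vol}\Lambda_L=4L_1L_2$, and for $v\in(2\mathbb Z)^2$ let $\Lambda_L+v$ be the translated box. Then $\ell^2(\Lambda_L+v)$ is the direct sum of $4L_1L_2$ of the blocks $\mathcal H^{j,k}$, and $U^{\Lambda_{L}+v}_{\omega}(0)$ denotes the restriction of $D_{\omega}S_{\circlearrowleft}$ to the invariant subspace $\ell^{2}(\Lambda_{L}+v)$. $\sigma(\cdot)$ denotes the spectrum. *)

theory Defs
  imports "HOL-Probability.Probability"
begin

(* Normalized Lebesgue (Haar) measure on the unit circle T, as the image of the
   uniform distribution on [0, 2 pi) under t |-> e^{i t}. *)
definition circle_measure :: "complex measure" where
  "circle_measure = distr (uniform_measure lborel {0..<2*pi}) borel cis"

definition Omega :: "(int \<times> int \<Rightarrow> complex) measure" where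
  "Omega = PiM UNIV (\<lambda>_. circle_measure)"

(* The cyclic permutation on each block H^{j,k}:
   (2j,2k) -> (2j+1,2k) -> (2j+1,2k+1) -> (2j,2k+1) -> (2j,2k). *)
definition cyc :: "int \<times> int \<Rightarrow> int \<times> int" where
  "cyc \<mu> = (case \<mu> of (a, b) \<Rightarrow>
      if even a \<and> even b then (a + 1, b)
      else if odd a \<and> even b then (a, b + 1)
      else if odd a \<and> odd b then (a - 1, b)
      else (a, b - 1))"

(* Matrix entries <e_mu, D_omega S e_nu> of D_omega S_circlearrowleft,
   where S e_nu = e_{cyc nu} and D_omega e_mu = omega_mu e_mu. *)
definition DS_entry :: "(int \<times> int \<Rightarrow> complex) \<Rightarrow> int \<times> int \<Rightarrow> int \<times> int \<Rightarrow> complex" where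
  "DS_entry \<omega> \<mu> \<nu> = (if \<mu> = cyc \<nu> then \<omega> \<mu> else 0)"

definition box :: "nat \<Rightarrow> nat \<Rightarrow> (int \<times> int) set" where
  "box L1 L2 = {(a, b). - 2 * int L1 \<le> a \<and> a \<le> 2 * int L1 - 1
                      \<and> - 2 * int L2 + 2 \<le> b \<and> b \<le> 2 * int L2 + 1}"

definition translate :: "(int \<times> int) set \<Rightarrow> int \<times> int \<Rightarrow> (int \<times> int) set" where
  "translate \<Lambda> v = (\<lambda>\<mu>. \<mu> + v) ` \<Lambda>"

definition vol_box :: "nat \<Rightarrow> nat \<Rightarrow> real" where
  "vol_box L1 L2 = 4 * real L1 * real L2"

(* Spectrum of the restriction of D_omega S to the finite-dimensional invariant
   subspace l^2(Lambda): the set of its eigenvalues. *)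
definition restricted_spectrum ::
    "(int \<times> int \<Rightarrow> complex) \<Rightarrow> (int \<times> int) set \<Rightarrow> complex set" where
  "restricted_spectrum \<omega> \<Lambda> =
     {e. \<exists>x :: int \<times> int \<Rightarrow> complex.
            (\<forall>\<mu>. \<mu> \<notin> \<Lambda> \<longrightarrow> x \<mu> = 0) \<and> (\<exists>\<mu>\<in>\<Lambda>. x \<mu> \<noteq> 0) \<and>
            (\<forall>\<mu>\<in>\<Lambda>. (\<Sum>\<nu>\<in>\<Lambda>. DS_entry \<omega> \<mu> \<nu> * x \<nu>) = e * x \<mu>)}"

end

theory Submission
  imports Defs
begin

text \<open>
  On a union of blocks the operator is a direct sum of weighted cyclic shifts of length four, so its
  spectrum consists of the fourth roots of the block phases, the products of the four phases of a
  block. A spectral point within \<open>\<eta>\<close> of \<open>z\<close> therefore makes some block phase the fourth power of a point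
  of \<open>cball z \<eta>\<close>. As \<open>e \<mapsto> e\<^sup>4\<close> is 4-Lipschitz on the unit circle, and the disc meets the circle only
  within distance \<open>2\<eta>\<close> of \<open>z/|z|\<close>, once the other three phases of the block are fixed the remaining
  one is confined to an arc of length \<open>O(\<eta>)\<close>. Fubini and a union bound over the sites of the box give
  the estimate, uniformly in \<open>z\<close>.
\<close>

subsection \<open>Arcs of the unit circle\<close>

lemma sin_ge_half_self:
  fixes s :: real
  assumes "0 \<le> s" "s \<le> pi/2"
  shows "s/2 \<le> sin s"
proof (cases "s \<le> pi/3")
  case True
  let ?f = "\<lambda>x. sin x - x/2"
  have deriv: "(?f has_real_derivative cos u - 1/2) (at u)" for u
    by (auto intro!: derivative_eq_intros)
  have "cos u - 1/2 \<ge> 0" if "0 \<le> u" "u \<le> s" for u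
  proof -
    have "cos (pi/3) \<le> cos u" using that True by (intro cos_monotone_0_pi_le) auto
    then show ?thesis by (simp add: cos_60)
  qed
  then have "?f 0 \<le> ?f s"
    using DERIV_nonneg_imp_nondecreasing[OF assms(1), of ?f] deriv by blast
  then show ?thesis by simp
next
  case False
  have "sin (pi/3) \<le> sin s" using False assms by (intro sin_monotone_2pi_le) auto
  moreover have "sin (pi/3) = sqrt 3 / 2" by (simp add: sin_60)
  moreover have "sqrt 3 \<ge> 1.7" by (rule real_le_rsqrt) (simp add: power2_eq_square)
  moreover have "pi \<le> 3.2" using pi_approx by simp
  ultimately show ?thesis using assms by simp
qed

lemma norm_cis_minus_one: "cmod (cis u - 1) = 2 * \<bar>sin (u/2)\<bar>"
proof -
  have "(cmod (cis u - 1))\<^sup>2 = (cos u - 1)\<^sup>2 + (sin u)\<^sup>2"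
    by (simp add: cmod_power2)
  also have "\<dots> = 2 - 2 * cos u"
    using sin_cos_squared_add[of u] by (simp add: power2_eq_square algebra_simps)
  also have "cos u = 1 - 2 * (sin (u/2))\<^sup>2"
    using cos_double_sin[of "u/2"] by simp
  finally have "(cmod (cis u - 1))\<^sup>2 = (2 * \<bar>sin (u/2)\<bar>)\<^sup>2"
    by (simp add: power2_eq_square)
  then show ?thesis by (subst (asm) power2_eq_iff_nonneg) auto
qed

lemma abs_le_two_norm_cis_minus_one:
  assumes "-pi \<le> u" "u \<le> pi"
  shows "\<bar>u\<bar> \<le> 2 * cmod (cis u - 1)"
proof -
  have "\<bar>u/2\<bar>/2 \<le> \<bar>sin (u/2)\<bar>"
    using sin_ge_half_self[of "u/2"] sin_ge_half_self[of "-u/2"] assms by (cases "u \<ge> 0") auto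
  then show ?thesis by (simp add: norm_cis_minus_one)
qed

lemma borel_measurable_cis [measurable]: "cis \<in> borel_measurable borel"
  by (intro borel_measurable_continuous_onI continuous_intros)

lemma sets_circle_measure [simp, measurable_cong]: "sets circle_measure = sets borel"
  by (simp add: circle_measure_def)

lemma space_circle_measure [simp]: "space circle_measure = UNIV"
  by (simp add: circle_measure_def)

lemma prob_space_circle_measure: "prob_space circle_measure"
  unfolding circle_measure_def
  by (intro prob_space.prob_space_distr prob_space_uniform_measure) auto

interpretation circle_product: product_prob_space "\<lambda>_. circle_measure" "UNIV :: (int \<times> int) set"
  unfolding product_prob_space_def product_prob_space_axioms_def product_sigma_finite_def
  using prob_space_circle_measure prob_space_imp_sigma_finite by auto

lemma AE_circle_measure_norm_eq_1: "AE y in circle_measure. cmod y = 1"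
  unfolding circle_measure_def by (subst AE_distr_iff) auto

lemma emeasure_circle_measure_cball_le:
  assumes w: "cmod w = 1" and \<delta>: "0 \<le> \<delta>"
  shows "emeasure circle_measure (cball w \<delta>) \<le> ennreal (2 * \<delta>)"
proof -
  define a where "a = Arg w"
  have "w \<noteq> 0" using w by auto
  then have w_eq: "w = cis a"
    using Arg_correct[of w] w by (auto simp: a_def sgn_div_norm)
  have a: "-pi < a" "a \<le> pi"
    using Arg_correct[of w] \<open>w \<noteq> 0\<close> by (auto simp: a_def)
  let ?S = "{0..<2*pi} \<inter> cis -` cball w \<delta>"
  have S_sub: "?S \<subseteq> {a - 2*\<delta> .. a + 2*\<delta>} \<union> {a + 2*pi - 2*\<delta> .. a + 2*pi + 2*\<delta>}"
  proof
    fix t assume t: "t \<in> ?S"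
    have "cis t - w = cis a * (cis (t - a) - 1)"
      by (simp add: w_eq algebra_simps cis_mult)
    then have "cmod (cis t - w) = cmod (cis (t - a) - 1)"
      by (simp add: norm_mult)
    then have close: "cmod (cis (t - a) - 1) \<le> \<delta>"
      using t by (simp add: dist_norm norm_minus_commute)
    \<comment> \<open>\<open>t - a \<in> (-pi, 3pi)\<close>; shift it into \<open>[-pi, pi]\<close> before comparing angle and chord\<close>
    show "t \<in> {a - 2*\<delta> .. a + 2*\<delta>} \<union> {a + 2*pi - 2*\<delta> .. a + 2*pi + 2*\<delta>}"
    proof (cases "t - a \<le> pi")
      case True
      then have "\<bar>t - a\<bar> \<le> 2 * cmod (cis (t - a) - 1)"
        using t a by (intro abs_le_two_norm_cis_minus_one) auto
      then show ?thesis using close by auto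
    next
      case False
      have "cis (t - a - 2*pi) = cis (t - a)" by (simp add: cis.ctr cos_diff sin_diff)
      moreover have "\<bar>t - a - 2*pi\<bar> \<le> 2 * cmod (cis (t - a - 2*pi) - 1)"
        using t a False by (intro abs_le_two_norm_cis_minus_one) auto
      ultimately show ?thesis using close by auto
    qed
  qed
  have "cis -` cball w \<delta> \<in> sets borel"
    using measurable_sets[OF borel_measurable_cis, of "cball w \<delta>"] by simp
  then have "emeasure circle_measure (cball w \<delta>) = emeasure lborel ?S / ennreal (2*pi)"
    unfolding circle_measure_def
    by (simp add: emeasure_distr emeasure_uniform_measure Int_commute)
  also have "\<dots> \<le> (emeasure lborel {a - 2*\<delta> .. a + 2*\<delta>}
                    + emeasure lborel {a + 2*pi - 2*\<delta> .. a + 2*pi + 2*\<delta>}) / ennreal (2*pi)"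
    by (intro divide_right_mono_ennreal order_trans[OF emeasure_mono[OF S_sub]]
        emeasure_subadditive) auto
  also have "\<dots> = ennreal (8 * \<delta> / (2*pi))"
    using \<delta> by (simp add: ennreal_plus[symmetric] divide_ennreal del: ennreal_plus)
  also have "\<dots> \<le> ennreal (2 * \<delta>)"
    using \<delta> pi_gt3 mult_right_mono[of 2 pi \<delta>] by (intro ennreal_leI) (simp add: field_simps)
  finally show ?thesis .
qed

subsection \<open>The block structure of the shift\<close>

definition cyc_inv :: "int \<times> int \<Rightarrow> int \<times> int" where
  "cyc_inv \<mu> = cyc (cyc (cyc \<mu>))"

definition block_phase :: "(int \<times> int \<Rightarrow> complex) \<Rightarrow> int \<times> int \<Rightarrow> complex" where
  "block_phase \<omega> \<mu> = \<omega> \<mu> * \<omega> (cyc \<mu>) * \<omega> (cyc (cyc \<mu>)) * \<omega> (cyc_inv \<mu>)"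

lemma cyc_simps:
  "even a \<Longrightarrow> even b \<Longrightarrow> cyc (a, b) = (a + 1, b)"
  "odd a \<Longrightarrow> even b \<Longrightarrow> cyc (a, b) = (a, b + 1)"
  "odd a \<Longrightarrow> odd b \<Longrightarrow> cyc (a, b) = (a - 1, b)"
  "even a \<Longrightarrow> odd b \<Longrightarrow> cyc (a, b) = (a, b - 1)"
  by (simp_all add: cyc_def)

lemma cyc_parity_cases:
  obtains a b where "\<mu> = (a, b)" "even a" "even b" | a b where "\<mu> = (a, b)" "odd a" "even b"
    | a b where "\<mu> = (a, b)" "odd a" "odd b" | a b where "\<mu> = (a, b)" "even a" "odd b"
  by (cases \<mu>) blast

lemma cyc_cyc_inv [simp]: "cyc (cyc_inv \<mu>) = \<mu>"
  and cyc_inv_cyc [simp]: "cyc_inv (cyc \<mu>) = \<mu>"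
  by (cases \<mu> rule: cyc_parity_cases; simp add: cyc_inv_def cyc_simps)+

lemma cyc_inv_inject [simp]: "cyc_inv \<mu> = cyc_inv \<nu> \<longleftrightarrow> \<mu> = \<nu>"
  by (metis cyc_cyc_inv)

lemma cyc_inv_cyc_inv [simp]: "cyc_inv (cyc_inv \<mu>) = cyc (cyc \<mu>)"
  unfolding cyc_inv_def[of \<mu>] by simp

lemma eq_cyc_iff: "\<mu> = cyc \<nu> \<longleftrightarrow> \<nu> = cyc_inv \<mu>"
  by auto

lemma distinct_cyc_orbit: "distinct [\<mu>, cyc \<mu>, cyc (cyc \<mu>), cyc_inv \<mu>]"
  by (cases \<mu> rule: cyc_parity_cases) (auto simp: cyc_inv_def cyc_simps)

lemma cyc_add_even:
  assumes "even (fst v)" "even (snd v)"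
  shows "cyc (\<mu> + v) = cyc \<mu> + v"
  using assms by (cases \<mu> rule: cyc_parity_cases; cases v) (auto simp: cyc_simps)

subsection \<open>The spectrum of the restricted operator\<close>

lemma cyc_inv_mem: "\<forall>\<mu>\<in>\<Lambda>. cyc \<mu> \<in> \<Lambda> \<Longrightarrow> \<mu> \<in> \<Lambda> \<Longrightarrow> cyc_inv \<mu> \<in> \<Lambda>"
  by (simp add: cyc_inv_def)

lemma sum_DS_entry:
  assumes "finite \<Lambda>" "\<forall>\<mu>\<in>\<Lambda>. cyc \<mu> \<in> \<Lambda>" "\<mu> \<in> \<Lambda>"
  shows "(\<Sum>\<nu>\<in>\<Lambda>. DS_entry \<omega> \<mu> \<nu> * x \<nu>) = \<omega> \<mu> * x (cyc_inv \<mu>)"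
proof -
  have "cyc_inv \<mu> \<in> \<Lambda>" using assms(2,3) by (rule cyc_inv_mem)
  have "(\<Sum>\<nu>\<in>\<Lambda>. DS_entry \<omega> \<mu> \<nu> * x \<nu>) = (\<Sum>\<nu>\<in>\<Lambda>. if \<nu> = cyc_inv \<mu> then \<omega> \<mu> * x \<nu> else 0)"
    by (intro sum.cong) (auto simp: DS_entry_def eq_cyc_iff)
  also have "\<dots> = \<omega> \<mu> * x (cyc_inv \<mu>)"
    using assms(1) \<open>cyc_inv \<mu> \<in> \<Lambda>\<close> by simp
  finally show ?thesis .
qed

lemma mem_restricted_spectrum_iff:
  assumes "finite \<Lambda>" "\<forall>\<mu>\<in>\<Lambda>. cyc \<mu> \<in> \<Lambda>"
  shows "e \<in> restricted_spectrum \<omega> \<Lambda> \<longleftrightarrow>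
    (\<exists>x. (\<forall>\<mu>. \<mu> \<notin> \<Lambda> \<longrightarrow> x \<mu> = 0) \<and> (\<exists>\<mu>\<in>\<Lambda>. x \<mu> \<noteq> 0) \<and>
         (\<forall>\<mu>\<in>\<Lambda>. \<omega> \<mu> * x (cyc_inv \<mu>) = e * x \<mu>))"
  using sum_DS_entry[OF assms] by (simp add: restricted_spectrum_def)

lemma eigenvalue_power4_eq_block_phase:
  assumes "finite \<Lambda>" and cyc_closed: "\<forall>\<mu>\<in>\<Lambda>. cyc \<mu> \<in> \<Lambda>"
    and "e \<in> restricted_spectrum \<omega> \<Lambda>"
  obtains \<mu> where "\<mu> \<in> \<Lambda>" "e ^ 4 = block_phase \<omega> \<mu>"
proof -
  obtain x \<mu> where \<mu>: "\<mu> \<in> \<Lambda>" "x \<mu> \<noteq> 0"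
    and eigen: "\<And>\<nu>. \<nu> \<in> \<Lambda> \<Longrightarrow> \<omega> \<nu> * x (cyc_inv \<nu>) = e * x \<nu>"
    using assms by (auto simp: mem_restricted_spectrum_iff)
  have orbit: "cyc \<mu> \<in> \<Lambda>" "cyc (cyc \<mu>) \<in> \<Lambda>" "cyc_inv \<mu> \<in> \<Lambda>"
    using cyc_closed \<mu>(1) by (auto intro: cyc_inv_mem)
  \<comment> \<open>go once around the block, applying the eigenvalue equation four times\<close>
  have "e ^ 4 * x \<mu> = e ^ 3 * (\<omega> \<mu> * x (cyc_inv \<mu>))"
    using eigen[OF \<mu>(1)] by (simp add: eval_nat_numeral)
  also have "\<dots> = e\<^sup>2 * \<omega> \<mu> * (\<omega> (cyc_inv \<mu>) * x (cyc (cyc \<mu>)))"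
    using eigen[OF orbit(3)] by (simp add: eval_nat_numeral algebra_simps)
  also have "\<dots> = e * \<omega> \<mu> * \<omega> (cyc_inv \<mu>) * (\<omega> (cyc (cyc \<mu>)) * x (cyc \<mu>))"
    using eigen[OF orbit(2)] by (simp add: eval_nat_numeral algebra_simps)
  also have "\<dots> = block_phase \<omega> \<mu> * x \<mu>"
    using eigen[OF orbit(1)] by (simp add: block_phase_def algebra_simps)
  finally show ?thesis using that \<mu> by simp
qed

lemma block_eigenvector:
  assumes "e \<noteq> 0" "e ^ 4 = block_phase \<omega> \<mu>"
  obtains x where "x \<mu> = 1" "\<And>\<nu>. \<nu> \<notin> {\<mu>, cyc \<mu>, cyc (cyc \<mu>), cyc_inv \<mu>} \<Longrightarrow> x \<nu> = 0"
    "\<And>\<nu>. \<omega> \<nu> * x (cyc_inv \<nu>) = e * x \<nu>"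
proof -
  define c1 c2 c3 where "c1 = cyc \<mu>" and "c2 = cyc (cyc \<mu>)" and "c3 = cyc_inv \<mu>"
  have neq: "\<mu> \<noteq> c1" "\<mu> \<noteq> c2" "\<mu> \<noteq> c3" "c1 \<noteq> c2" "c1 \<noteq> c3" "c2 \<noteq> c3"
    using distinct_cyc_orbit[of \<mu>] by (auto simp: c1_def c2_def c3_def)
  have prev: "cyc_inv \<mu> = c3" "cyc_inv c1 = \<mu>" "cyc_inv c2 = c1" "cyc_inv c3 = c2"
    unfolding c1_def c2_def c3_def by simp_all
  have phase: "\<omega> \<mu> * \<omega> c1 * \<omega> c2 * \<omega> c3 = e ^ 4"
    using assms(2) by (simp add: block_phase_def c1_def c2_def c3_def)
  define x where "x = (\<lambda>\<nu>. if \<nu> = \<mu> then 1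
      else if \<nu> = c1 then \<omega> c1 / e
      else if \<nu> = c2 then \<omega> c2 * \<omega> c1 / e\<^sup>2
      else if \<nu> = c3 then \<omega> c3 * \<omega> c2 * \<omega> c1 / e ^ 3 else 0)"
  have x: "x \<mu> = 1" "x c1 = \<omega> c1 / e" "x c2 = \<omega> c2 * \<omega> c1 / e\<^sup>2"
    "x c3 = \<omega> c3 * \<omega> c2 * \<omega> c1 / e ^ 3"
    using neq by (simp_all add: x_def neq[symmetric])
  have succ: "cyc \<mu> = c1" "cyc c1 = c2" "cyc c2 = c3" "cyc c3 = \<mu>"
    by (simp_all add: c1_def c2_def c3_def) (simp add: cyc_inv_def)
  have eigen: "\<omega> \<nu> * x (cyc_inv \<nu>) = e * x \<nu>" for \<nu>
  proof -
    consider "\<nu> = \<mu>" | "\<nu> = c1" | "\<nu> = c2" | "\<nu> = c3" | (outside) "\<nu> \<notin> {\<mu>, c1, c2, c3}"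
      by blast
    then show ?thesis
    proof cases
      case 1
      have "\<omega> \<mu> * x c3 = (\<omega> \<mu> * \<omega> c1 * \<omega> c2 * \<omega> c3) / e ^ 3"
        by (simp add: x mult_ac)
      also have "\<dots> = e * x \<mu>"
        using assms(1) by (simp add: phase x eval_nat_numeral)
      finally show ?thesis using 1 prev by simp
    next
      case outside
      have "cyc_inv \<nu> \<notin> {\<mu>, c1, c2, c3}"
      proof
        assume "cyc_inv \<nu> \<in> {\<mu>, c1, c2, c3}"
        then have "cyc (cyc_inv \<nu>) \<in> {cyc \<mu>, cyc c1, cyc c2, cyc c3}" by blast
        then show False using outside unfolding succ cyc_cyc_inv by blast
      qed
      then show ?thesis using outside by (simp add: x_def)
    qed (use assms(1) in \<open>simp_all add: prev x field_simps eval_nat_numeral\<close>)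
  qed
  show ?thesis
  proof (rule that)
    show "x \<nu> = 0" if "\<nu> \<notin> {\<mu>, cyc \<mu>, cyc (cyc \<mu>), cyc_inv \<mu>}" for \<nu>
      using that by (simp add: x_def c1_def c2_def c3_def)
  qed (fact x eigen)+
qed

lemma power4_eq_block_phase_imp_eigenvalue:
  assumes "finite \<Lambda>" and cyc_closed: "\<forall>\<mu>\<in>\<Lambda>. cyc \<mu> \<in> \<Lambda>"
    and \<mu>: "\<mu> \<in> \<Lambda>" and e: "e ^ 4 = block_phase \<omega> \<mu>"
  shows "e \<in> restricted_spectrum \<omega> \<Lambda>"
proof (cases "e = 0")
  case True
  then have "\<omega> \<mu> = 0 \<or> \<omega> (cyc \<mu>) = 0 \<or> \<omega> (cyc (cyc \<mu>)) = 0 \<or> \<omega> (cyc_inv \<mu>) = 0"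
    using e by (simp add: block_phase_def)
  moreover have "cyc \<mu> \<in> \<Lambda>" "cyc (cyc \<mu>) \<in> \<Lambda>" "cyc_inv \<mu> \<in> \<Lambda>"
    using \<mu> cyc_closed by (auto intro: cyc_inv_mem)
  ultimately obtain \<nu> where \<nu>: "\<nu> \<in> \<Lambda>" "\<omega> \<nu> = 0"
    using \<mu> by blast
  define x where "x = (\<lambda>\<nu>'. if \<nu>' = cyc_inv \<nu> then (1::complex) else 0)"
  have "\<forall>\<nu>'\<in>\<Lambda>. \<omega> \<nu>' * x (cyc_inv \<nu>') = e * x \<nu>'"
    using \<nu>(2) True by (simp add: x_def)
  moreover have "cyc_inv \<nu> \<in> \<Lambda>"
    using cyc_closed \<nu>(1) by (rule cyc_inv_mem)
  ultimately show ?thesis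
    unfolding mem_restricted_spectrum_iff[OF assms(1,2)] by (intro exI[of _ x]) (auto simp: x_def)
next
  case False
  obtain x where x: "x \<mu> = 1" "\<And>\<nu>. \<nu> \<notin> {\<mu>, cyc \<mu>, cyc (cyc \<mu>), cyc_inv \<mu>} \<Longrightarrow> x \<nu> = 0"
    "\<And>\<nu>. \<omega> \<nu> * x (cyc_inv \<nu>) = e * x \<nu>"
    using block_eigenvector[OF False e] by blast
  have "{\<mu>, cyc \<mu>, cyc (cyc \<mu>), cyc_inv \<mu>} \<subseteq> \<Lambda>"
    using cyc_closed \<mu> by (auto intro: cyc_inv_mem)
  then have "\<forall>\<nu>. \<nu> \<notin> \<Lambda> \<longrightarrow> x \<nu> = 0"
    using x(2) by blast
  then show ?thesis
    unfolding mem_restricted_spectrum_iff[OF assms(1,2)] using \<mu> x(1,3)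
    by (intro exI[of _ x] conjI bexI[of _ \<mu>]) simp_all
qed

lemma restricted_spectrum_eq_block_phase_roots:
  assumes "finite \<Lambda>" "\<forall>\<mu>\<in>\<Lambda>. cyc \<mu> \<in> \<Lambda>"
  shows "restricted_spectrum \<omega> \<Lambda> = {e. \<exists>\<mu>\<in>\<Lambda>. e ^ 4 = block_phase \<omega> \<mu>}"
  by (auto elim: eigenvalue_power4_eq_block_phase[OF assms]
           intro: power4_eq_block_phase_imp_eigenvalue[OF assms])

lemma finite_restricted_spectrum:
  assumes "finite \<Lambda>" "\<forall>\<mu>\<in>\<Lambda>. cyc \<mu> \<in> \<Lambda>"
  shows "finite (restricted_spectrum \<omega> \<Lambda>)"
proof -
  have "restricted_spectrum \<omega> \<Lambda> = (\<Union>\<mu>\<in>\<Lambda>. {e. e ^ 4 = block_phase \<omega> \<mu>})"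
    using restricted_spectrum_eq_block_phase_roots[OF assms] by auto
  then show ?thesis
    using assms(1) by auto
qed

lemma restricted_spectrum_nonempty:
  assumes "finite \<Lambda>" "\<forall>\<mu>\<in>\<Lambda>. cyc \<mu> \<in> \<Lambda>" "\<mu> \<in> \<Lambda>"
  shows "restricted_spectrum \<omega> \<Lambda> \<noteq> {}"
proof -
  have "(csqrt (csqrt (block_phase \<omega> \<mu>))) ^ 4 = ((csqrt (csqrt (block_phase \<omega> \<mu>)))\<^sup>2)\<^sup>2"
    by (simp add: eval_nat_numeral)
  also have "\<dots> = block_phase \<omega> \<mu>"
    by simp
  finally show ?thesis
    using restricted_spectrum_eq_block_phase_roots[OF assms(1,2)] assms(3) by auto
qed

lemma box_eq_Times: "box L1 L2 = {- 2 * int L1 .. 2 * int L1 - 1} \<times> {- 2 * int L2 + 2 .. 2 * int L2 + 1}"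
  by (auto simp: box_def)

lemma cyc_mem_box: "\<mu> \<in> box L1 L2 \<Longrightarrow> cyc \<mu> \<in> box L1 L2"
proof (cases \<mu> rule: cyc_parity_cases)
  case (1 a b)
  moreover assume "\<mu> \<in> box L1 L2"
  moreover have "a \<noteq> 2 * int L1 - 1" using 1 by presburger
  ultimately show ?thesis by (auto simp: box_def cyc_simps)
next
  case (2 a b)
  moreover assume "\<mu> \<in> box L1 L2"
  moreover have "b \<noteq> 2 * int L2 + 1" using 2 by presburger
  ultimately show ?thesis by (auto simp: box_def cyc_simps)
next
  case (3 a b)
  moreover assume "\<mu> \<in> box L1 L2"
  moreover have "a \<noteq> - 2 * int L1" using 3 by presburger
  ultimately show ?thesis by (auto simp: box_def cyc_simps)
next
  case (4 a b)
  moreover assume "\<mu> \<in> box L1 L2"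
  moreover have "b \<noteq> - 2 * int L2 + 2" using 4 by presburger
  ultimately show ?thesis by (auto simp: box_def cyc_simps)
qed

lemma cyc_mem_translate_box:
  assumes "even (fst v)" "even (snd v)" "\<mu> \<in> translate (box L1 L2) v"
  shows "cyc \<mu> \<in> translate (box L1 L2) v"
  using assms cyc_mem_box by (auto simp: translate_def cyc_add_even)

lemma finite_translate_box: "finite (translate (box L1 L2) v)"
  by (simp add: translate_def box_eq_Times)

lemma card_translate_box: "real (card (translate (box L1 L2) v)) = 4 * vol_box L1 L2"
proof -
  have "card (translate (box L1 L2) v) = card (box L1 L2)"
    unfolding translate_def by (rule card_image) (simp add: inj_on_def)
  also have "\<dots> = nat (4 * int L1) * nat (4 * int L2)"
    by (simp add: box_eq_Times card_cartesian_product)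
  finally show ?thesis
    by (simp add: vol_box_def nat_mult_distrib)
qed

lemma translate_box_nonempty:
  assumes "L1 \<ge> 1" "L2 \<ge> 1"
  shows "translate (box L1 L2) v \<noteq> {}"
proof -
  have "(- 2 * int L1, - 2 * int L2 + 2) \<in> box L1 L2"
    using assms by (simp add: box_def)
  then show ?thesis by (auto simp: translate_def)
qed

subsection \<open>Fourth powers of a disc\<close>

definition power4_cball :: "complex \<Rightarrow> real \<Rightarrow> complex set" where
  "power4_cball z \<eta> = (\<lambda>e. e ^ 4) ` cball z \<eta>"

lemma closed_power4_cball: "closed (power4_cball z \<eta>)"
  unfolding power4_cball_def
  by (intro compact_imp_closed compact_continuous_image continuous_intros) auto

lemma power4_cball_borel [measurable]: "power4_cball z \<eta> \<in> sets borel"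
  using closed_power4_cball by (rule borel_closed)

text \<open>A point of the unit circle nearest to \<open>z\<close>; for \<open>z = 0\<close> every point is nearest.\<close>

definition nearest_unit :: "complex \<Rightarrow> complex" where
  "nearest_unit z = (if z = 0 then 1 else sgn z)"

lemma norm_nearest_unit [simp]: "cmod (nearest_unit z) = 1"
  by (simp add: nearest_unit_def norm_sgn)

lemma norm_diff_nearest_unit_le:
  assumes "cmod e = 1"
  shows "cmod (e - nearest_unit z) \<le> 2 * cmod (e - z)"
proof (cases "z = 0")
  case True
  then show ?thesis
    using assms norm_triangle_ineq4[of e 1] by (simp add: nearest_unit_def)
next
  case False
  have "z - sgn z = of_real (cmod z - 1) * sgn z"
    using False by (simp add: sgn_div_norm scaleR_conv_of_real field_simps)
  then have "cmod (z - nearest_unit z) = \<bar>cmod z - 1\<bar>"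
    using False by (simp add: nearest_unit_def norm_mult norm_sgn del: of_real_diff)
  also have "\<dots> \<le> cmod (e - z)"
    using assms norm_triangle_ineq3[of z e] by (simp add: norm_minus_commute)
  finally show ?thesis
    using norm_triangle_ineq[of "e - z" "z - nearest_unit z"] by simp
qed

lemma unit_mult_mem_power4_cball_imp_near:
  assumes y: "cmod y = 1" and q: "cmod q = 1" and "y * q \<in> power4_cball z \<eta>"
  shows "cmod (y - nearest_unit z ^ 4 / q) \<le> 8 * \<eta>"
proof -
  obtain e where "e \<in> cball z \<eta>" "y * q = e ^ 4"
    using assms(3) unfolding power4_cball_def by blast
  then have e: "cmod (e - z) \<le> \<eta>" "y * q = e ^ 4"
    by (simp_all add: dist_norm norm_minus_commute)
  have "cmod e ^ 4 = 1"
    using y q e(2) by (metis norm_mult norm_power mult_1_left)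
  then have e1: "cmod e = 1"
    using power_eq_1_iff[of "cmod e" 4] by simp
  have "q \<noteq> 0" using q by auto
  then have "y - nearest_unit z ^ 4 / q = (e ^ 4 - nearest_unit z ^ 4) / q"
    using e(2) by (simp add: field_simps)
  then have "cmod (y - nearest_unit z ^ 4 / q) = cmod (e ^ 4 - nearest_unit z ^ 4)"
    using q by (simp add: norm_divide)
  also have "\<dots> \<le> 4 * cmod (e - nearest_unit z)"
    using norm_power_diff[of e "nearest_unit z" 4] e1 by simp
  also have "\<dots> \<le> 8 * cmod (e - z)"
    using norm_diff_nearest_unit_le[OF e1, of z] by simp
  finally show ?thesis
    using e(1) by simp
qed

lemma emeasure_circle_slice_power4_cball_le:
  assumes "cmod q = 1" "0 \<le> \<eta>"
  shows "emeasure circle_measure {y. cmod y = 1 \<and> y * q \<in> power4_cball z \<eta>} \<le> ennreal (16 * \<eta>)"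
proof -
  have "emeasure circle_measure {y. cmod y = 1 \<and> y * q \<in> power4_cball z \<eta>}
      \<le> emeasure circle_measure (cball (nearest_unit z ^ 4 / q) (8 * \<eta>))"
    using unit_mult_mem_power4_cball_imp_near[OF _ assms(1)]
    by (intro emeasure_mono) (auto simp: dist_norm norm_minus_commute)
  also have "\<dots> \<le> ennreal (2 * (8 * \<eta>))"
    using assms by (intro emeasure_circle_measure_cball_le) (simp_all add: norm_divide norm_power)
  finally show ?thesis by simp
qed

subsection \<open>Probability estimates\<close>

lemma emeasure_PiM_insert_circle_le:
  fixes J :: "(int \<times> int) set"
  assumes "finite J" "i \<notin> J" and X: "X \<in> sets (PiM (insert i J) (\<lambda>_. circle_measure))"
    and slice: "\<And>x. (\<integral>\<^sup>+ y. indicator X (x(i := y)) \<partial>circle_measure) \<le> c"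
  shows "emeasure (PiM (insert i J) (\<lambda>_. circle_measure)) X \<le> c"
proof -
  interpret J: prob_space "PiM J (\<lambda>_. circle_measure)"
    by (rule prob_space_PiM) (rule prob_space_circle_measure)
  have "emeasure (PiM (insert i J) (\<lambda>_. circle_measure)) X
      = (\<integral>\<^sup>+ x. (\<integral>\<^sup>+ y. indicator X (x(i := y)) \<partial>circle_measure) \<partial>PiM J (\<lambda>_. circle_measure))"
    using assms by (simp add: circle_product.product_nn_integral_insert flip: nn_integral_indicator)
  also have "\<dots> \<le> (\<integral>\<^sup>+ x. c \<partial>PiM J (\<lambda>_. circle_measure))"
    by (intro nn_integral_mono slice)
  also have "\<dots> = c"
    by (simp add: J.emeasure_space_1)
  finally show ?thesis .
qed

lemma emeasure_block_phase_mem_le: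
  assumes F [measurable]: "F \<in> sets borel"
    and slice: "\<And>q. cmod q = 1 \<Longrightarrow> emeasure circle_measure {y. cmod y = 1 \<and> y * q \<in> F} \<le> c"
  shows "emeasure Omega {\<omega> \<in> space Omega. block_phase \<omega> \<mu> \<in> F} \<le> c"
proof -
  let ?M = "\<lambda>_ :: int \<times> int. circle_measure"
  define c1 c2 c3 where "c1 = cyc \<mu>" and "c2 = cyc (cyc \<mu>)" and "c3 = cyc_inv \<mu>"
  define I0 where "I0 = {c1, c2, c3}"
  define I where "I = insert \<mu> I0"
  have \<mu>_notin: "\<mu> \<notin> I0"
    using distinct_cyc_orbit[of \<mu>] by (simp add: I0_def c1_def c2_def c3_def)
  have finite: "finite I0" "finite I" and in_I: "\<mu> \<in> I" "c1 \<in> I" "c2 \<in> I" "c3 \<in> I"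
    by (simp_all add: I0_def I_def)
  define X where
    "X = {x \<in> space (PiM I ?M). (\<forall>i\<in>I. cmod (x i) = 1) \<and> x \<mu> * (x c1 * x c2 * x c3) \<in> F}"
  have X [measurable]: "X \<in> sets (PiM I ?M)"
    unfolding X_def using finite in_I by measurable
  have "AE \<omega> in Omega. \<forall>i\<in>I. cmod (\<omega> i) = 1"
    unfolding Omega_def using finite
    by (intro eventually_ball_finite ballI circle_product.AE_component AE_circle_measure_norm_eq_1) auto
  then have "emeasure Omega {\<omega> \<in> space Omega. block_phase \<omega> \<mu> \<in> F}
      \<le> emeasure Omega (prod_emb UNIV ?M I X)"
  proof (rule emeasure_mono_AE[OF AE_mp])
    show "AE \<omega> in Omega. (\<forall>i\<in>I. cmod (\<omega> i) = 1) \<longrightarrow>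
        \<omega> \<in> {\<omega> \<in> space Omega. block_phase \<omega> \<mu> \<in> F} \<longrightarrow> \<omega> \<in> prod_emb UNIV ?M I X"
      using in_I by (intro AE_I2) (auto simp: Omega_def prod_emb_def X_def space_PiM
          block_phase_def c1_def c2_def c3_def mult.assoc)
    show "prod_emb UNIV ?M I X \<in> sets Omega"
      unfolding Omega_def by (rule measurable_prod_emb[OF _ X]) simp
  qed
  also have "\<dots> = emeasure (PiM (insert \<mu> I0) ?M) X"
    using circle_product.emeasure_PiM_emb'[of I X] finite X by (simp add: Omega_def I_def)
  also have "\<dots> \<le> c"
  proof (rule emeasure_PiM_insert_circle_le)
    fix x
    show "(\<integral>\<^sup>+ y. indicator X (x(\<mu> := y)) \<partial>circle_measure) \<le> c"
    proof (cases "\<forall>i\<in>I0. cmod (x i) = 1")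
      case True
      define q where "q = x c1 * x c2 * x c3"
      have "cmod q = 1" using True by (simp add: q_def norm_mult I0_def)
      have "c1 \<noteq> \<mu>" "c2 \<noteq> \<mu>" "c3 \<noteq> \<mu>" using \<mu>_notin by (auto simp: I0_def)
      then have "indicator X (x(\<mu> := y)) \<le> (indicator {y. cmod y = 1 \<and> y * q \<in> F} y :: ennreal)" for y
        using in_I by (auto simp: X_def q_def split: split_indicator)
      then have "(\<integral>\<^sup>+ y. indicator X (x(\<mu> := y)) \<partial>circle_measure)
          \<le> (\<integral>\<^sup>+ y. indicator {y. cmod y = 1 \<and> y * q \<in> F} y \<partial>circle_measure)"
        by (intro nn_integral_mono)
      also have "\<dots> = emeasure circle_measure {y. cmod y = 1 \<and> y * q \<in> F}"
      proof (rule nn_integral_indicator)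
        have "{y \<in> space circle_measure. cmod y = 1 \<and> y * q \<in> F} \<in> sets circle_measure"
          by measurable
        then show "{y. cmod y = 1 \<and> y * q \<in> F} \<in> sets circle_measure"
          by simp
      qed
      also have "\<dots> \<le> c" by (rule slice) fact
      finally show ?thesis .
    next
      case False
      then have "x(\<mu> := y) \<notin> X" for y
        using \<mu>_notin by (auto simp: X_def I_def)
      then show ?thesis by simp
    qed
  qed (use finite \<mu>_notin X in \<open>simp_all add: I_def\<close>)
  finally show ?thesis .
qed

lemma infdist_le_iff:
  fixes S :: "'a::heine_borel set"
  assumes "closed S" "S \<noteq> {}"
  shows "infdist x S \<le> d \<longleftrightarrow> (\<exists>y\<in>S. dist x y \<le> d)"
  using infdist_attains_inf[OF assms, of x] infdist_le2[of _ S x d] by metis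

lemma near_restricted_spectrum_eq_Union:
  assumes "finite \<Lambda>" "\<forall>\<mu>\<in>\<Lambda>. cyc \<mu> \<in> \<Lambda>" "\<Lambda> \<noteq> {}"
  shows "{\<omega> \<in> space Omega. infdist z (restricted_spectrum \<omega> \<Lambda>) \<le> \<eta>}
       = (\<Union>\<mu>\<in>\<Lambda>. {\<omega> \<in> space Omega. block_phase \<omega> \<mu> \<in> power4_cball z \<eta>})"
proof -
  have "infdist z (restricted_spectrum \<omega> \<Lambda>) \<le> \<eta> \<longleftrightarrow> (\<exists>\<mu>\<in>\<Lambda>. block_phase \<omega> \<mu> \<in> power4_cball z \<eta>)"
    for \<omega>
  proof -
    have "closed (restricted_spectrum \<omega> \<Lambda>)" "restricted_spectrum \<omega> \<Lambda> \<noteq> {}"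
      using assms finite_restricted_spectrum restricted_spectrum_nonempty
      by (auto intro: finite_imp_closed)
    then have "infdist z (restricted_spectrum \<omega> \<Lambda>) \<le> \<eta>
        \<longleftrightarrow> (\<exists>e\<in>restricted_spectrum \<omega> \<Lambda>. dist z e \<le> \<eta>)"
      by (rule infdist_le_iff)
    also have "\<dots> \<longleftrightarrow> (\<exists>\<mu>\<in>\<Lambda>. block_phase \<omega> \<mu> \<in> power4_cball z \<eta>)"
      unfolding restricted_spectrum_eq_block_phase_roots[OF assms(1,2)] power4_cball_def
      by (force simp: image_iff)
    finally show ?thesis .
  qed
  then show ?thesis by auto
qed

lemma measure_near_restricted_spectrum_le:
  fixes z :: complex
  assumes "finite \<Lambda>" "\<forall>\<mu>\<in>\<Lambda>. cyc \<mu> \<in> \<Lambda>" "\<Lambda> \<noteq> {}" "0 \<le> \<eta>"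
  defines "A \<equiv> {\<omega> \<in> space Omega. infdist z (restricted_spectrum \<omega> \<Lambda>) \<le> \<eta>}"
  shows "A \<in> sets Omega" "measure Omega A \<le> 16 * \<eta> * card \<Lambda>"
proof -
  interpret prob_space Omega
    unfolding Omega_def by (rule circle_product.prob_space_axioms)
  define E where "E \<mu> = {\<omega> \<in> space Omega. block_phase \<omega> \<mu> \<in> power4_cball z \<eta>}" for \<mu>
  have E: "E \<mu> \<in> sets Omega" for \<mu>
    unfolding E_def block_phase_def Omega_def by measurable
  have A: "A = (\<Union>\<mu>\<in>\<Lambda>. E \<mu>)"
    unfolding A_def E_def by (rule near_restricted_spectrum_eq_Union[OF assms(1-3)])
  show "A \<in> sets Omega"
    unfolding A using assms(1) E by auto
  have "measure Omega (E \<mu>) \<le> 16 * \<eta>" for \<mu>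
  proof -
    have "emeasure Omega (E \<mu>) \<le> ennreal (16 * \<eta>)"
      unfolding E_def
      by (intro emeasure_block_phase_mem_le emeasure_circle_slice_power4_cball_le assms(4)) simp_all
    then show ?thesis
      using assms(4) by (simp add: emeasure_eq_measure)
  qed
  then have "measure Omega A \<le> (\<Sum>\<mu>\<in>\<Lambda>. 16 * \<eta>)"
    unfolding A using assms(1) E by (intro order_trans[OF finite_measure_subadditive_finite] sum_mono) auto
  then show "measure Omega A \<le> 16 * \<eta> * card \<Lambda>"
    by (simp add: mult.commute)
qed

theorem proposition1:
  shows "\<exists>C > 0. \<exists>\<epsilon>0 > 0. \<forall>L1 L2 :: nat. \<forall>\<eta> :: real.
     L1 \<ge> 1 \<longrightarrow> L2 \<ge> 1 \<longrightarrow> \<eta> > 0 \<longrightarrow> \<eta> * vol_box L1 L2 \<le> \<epsilon>0 \<longrightarrow>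
     (\<forall>v :: int \<times> int. even (fst v) \<longrightarrow> even (snd v) \<longrightarrow>
      (\<forall>z :: complex. cmod z \<noteq> 1 \<longrightarrow>
        (let A = {\<omega> \<in> space Omega.
                   infdist z (restricted_spectrum \<omega> (translate (box L1 L2) v)) \<le> \<eta>}
         in A \<in> sets Omega \<and> measure Omega A \<le> C * \<eta> * vol_box L1 L2)))"
proof (intro exI[of _ 64] exI[of _ 1] conjI allI impI; (simp only: zero_less_one zero_less_numeral)?)
  fix L1 L2 :: nat and \<eta> :: real and v :: "int \<times> int" and z :: complex
  assume L: "1 \<le> L1" "1 \<le> L2" and \<eta>: "0 < \<eta>" and v: "even (fst v)" "even (snd v)"
  let ?\<Lambda> = "translate (box L1 L2) v"
  have "finite ?\<Lambda>" "\<forall>\<mu>\<in>?\<Lambda>. cyc \<mu> \<in> ?\<Lambda>" "?\<Lambda> \<noteq> {}"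
    using finite_translate_box cyc_mem_translate_box[OF v] translate_box_nonempty[OF L] by blast+
  from measure_near_restricted_spectrum_le[OF this less_imp_le[OF \<eta>], of z]
  show "let A = {\<omega> \<in> space Omega. infdist z (restricted_spectrum \<omega> ?\<Lambda>) \<le> \<eta>}
        in A \<in> sets Omega \<and> measure Omega A \<le> 64 * \<eta> * vol_box L1 L2"
    by (simp add: card_translate_box Let_def)
qed

end
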